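(* Let $G$ be an $n\times n$ bimatrix game with payoff matrices $R,C\in[0,1]^{n\times n}$ that has a Nash equilibrium which is not a pair of pure strategies. (a) If $G$ satisfies the strong well-supported $(\epsilon,\Delta)$-approximation stability condition, then $\Delta\ge\epsilon/4$. (b) If $G$ satisfies the strong $(\epsilon,\Delta)$-stability to perturbations condition, then $\Delta\ge\epsilon/8$.
   Context: Mixed strategies are probability vectors; payoffs $p^TRq$, $p^TCq$; $e_i$ the $i$-th unit vector; $\mathrm{supp}(p)=\{i:p_i>0\}$. Nash equilibrium: $e_i^TRq\le p^TRq$ and $p^TCe_j\le p^TCq$ for all $i,j$. Well-supported $\epsilon$-equilibrium: for every $i\in\mathrm{supp}(p)$ and all $j$, $e_i^TRq\ge e_j^TRq-\epsilon$, and for every $i\in\mathrm{supp}(q)$ and all $j$, $p^TCe_i\ge p^TCe_j-\epsilon$. Distance $d(p,p')=\frac12\sum_i|p_i-p'_i|$, $d((p,q),(p',q'))=\max(d(p,p'),d(q,q'))$; $\Delta$-close means distance $\le\Delta$. $G'$ (matrices $R',C'$) is an $L_\infty$ $\epsilon$-perturbation of $G$ if $|R_{i,j}-R'_{i,j}|\le\epsilon$ and $|C_{i,j}-C'_{i,j}|\le\epsilon$ for all $i,j$ (entries need not lie in $[0,1]$). Strong well-supported $(\epsilon,\Delta)$-approximation stability: there is a Nash equilibrium $(p^*,q^* )$ of $G$ such that every well-supported $\epsilon$-equilibrium of $G$ is $\Delta$-close to $(p^*,q^* )$. Strong $(\epsilon,\Delta)$-stability to perturbations: there is a Nash equilibrium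 $(p^*,q^* )$ of $G$ such that for every $L_\infty$ $\epsilon$-perturbation $G'$ of $G$, every Nash equilibrium of $G'$ is $\Delta$-close to $(p^*,q^* )$. *)

theory Defs
  imports Complex_Main
begin

text \<open>Strategies of an n x n bimatrix game are real vectors indexed by a finite
  type 'n (so n = CARD('n)); matrices are functions 'n \<Rightarrow> 'n \<Rightarrow> real.\<close>

definition prob_vec :: "('n::finite \<Rightarrow> real) \<Rightarrow> bool" where
  "prob_vec p \<longleftrightarrow> (\<forall>i. 0 \<le> p i) \<and> (\<Sum>i\<in>UNIV. p i) = 1"

definition bil :: "('n::finite \<Rightarrow> real) \<Rightarrow> ('n \<Rightarrow> 'n \<Rightarrow> real) \<Rightarrow> ('n \<Rightarrow> real) \<Rightarrow> real" where
  "bil p M q = (\<Sum>i\<in>UNIV. \<Sum>j\<in>UNIV. p i * M i j * q j)"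

definition unitv :: "'n \<Rightarrow> ('n \<Rightarrow> real)" where
  "unitv i = (\<lambda>k. if k = i then 1 else 0)"

definition supp :: "('n \<Rightarrow> real) \<Rightarrow> 'n set" where
  "supp p = {i. p i > 0}"

definition entries01 :: "('n \<Rightarrow> 'n \<Rightarrow> real) \<Rightarrow> bool" where
  "entries01 M \<longleftrightarrow> (\<forall>i j. 0 \<le> M i j \<and> M i j \<le> 1)"

definition nash :: "('n::finite \<Rightarrow> 'n \<Rightarrow> real) \<Rightarrow> ('n \<Rightarrow> 'n \<Rightarrow> real) \<Rightarrow> ('n \<Rightarrow> real) \<Rightarrow> ('n \<Rightarrow> real) \<Rightarrow> bool" where
  "nash R C p q \<longleftrightarrow> prob_vec p \<and> prob_vec q \<and>
     (\<forall>i. bil (unitv i) R q \<le> bil p R q) \<and> (\<forall>j. bil p C (unitv j) \<le> bil p C q)"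

definition ws_eq :: "real \<Rightarrow> ('n::finite \<Rightarrow> 'n \<Rightarrow> real) \<Rightarrow> ('n \<Rightarrow> 'n \<Rightarrow> real) \<Rightarrow> ('n \<Rightarrow> real) \<Rightarrow> ('n \<Rightarrow> real) \<Rightarrow> bool" where
  "ws_eq \<epsilon> R C p q \<longleftrightarrow> prob_vec p \<and> prob_vec q \<and>
     (\<forall>i\<in>supp p. \<forall>j. bil (unitv i) R q \<ge> bil (unitv j) R q - \<epsilon>) \<and>
     (\<forall>i\<in>supp q. \<forall>j. bil p C (unitv i) \<ge> bil p C (unitv j) - \<epsilon>)"

definition dist_strat :: "('n::finite \<Rightarrow> real) \<Rightarrow> ('n \<Rightarrow> real) \<Rightarrow> real" where
  "dist_strat p p' = (1/2) * (\<Sum>i\<in>UNIV. \<bar>p i - p' i\<bar>)"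

definition dist_prof :: "('n::finite \<Rightarrow> real) \<Rightarrow> ('n \<Rightarrow> real) \<Rightarrow> ('n \<Rightarrow> real) \<Rightarrow> ('n \<Rightarrow> real) \<Rightarrow> real" where
  "dist_prof p q p' q' = max (dist_strat p p') (dist_strat q q')"

definition pure_pair :: "('n \<Rightarrow> real) \<Rightarrow> ('n \<Rightarrow> real) \<Rightarrow> bool" where
  "pure_pair p q \<longleftrightarrow> (\<exists>i j. p = unitv i \<and> q = unitv j)"

definition perturbation :: "real \<Rightarrow> ('n \<Rightarrow> 'n \<Rightarrow> real) \<Rightarrow> ('n \<Rightarrow> 'n \<Rightarrow> real) \<Rightarrow> ('n \<Rightarrow> 'n \<Rightarrow> real) \<Rightarrow> ('n \<Rightarrow> 'n \<Rightarrow> real) \<Rightarrow> bool" where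
  "perturbation \<epsilon> R C R' C' \<longleftrightarrow> (\<forall>i j. \<bar>R i j - R' i j\<bar> \<le> \<epsilon> \<and> \<bar>C i j - C' i j\<bar> \<le> \<epsilon>)"

definition strong_ws_approx_stable :: "real \<Rightarrow> real \<Rightarrow> ('n::finite \<Rightarrow> 'n \<Rightarrow> real) \<Rightarrow> ('n \<Rightarrow> 'n \<Rightarrow> real) \<Rightarrow> bool" where
  "strong_ws_approx_stable \<epsilon> \<Delta> R C \<longleftrightarrow>
     (\<exists>ps qs. nash R C ps qs \<and>
        (\<forall>p q. ws_eq \<epsilon> R C p q \<longrightarrow> dist_prof p q ps qs \<le> \<Delta>))"

definition strong_pert_stable :: "real \<Rightarrow> real \<Rightarrow> ('n::finite \<Rightarrow> 'n \<Rightarrow> real) \<Rightarrow> ('n \<Rightarrow> 'n \<Rightarrow> real) \<Rightarrow> bool" where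
  "strong_pert_stable \<epsilon> \<Delta> R C \<longleftrightarrow>
     (\<exists>ps qs. nash R C ps qs \<and>
        (\<forall>R' C' p q. perturbation \<epsilon> R C R' C' \<longrightarrow> nash R' C' p q \<longrightarrow> dist_prof p q ps qs \<le> \<Delta>))"

end

theory Submission
  imports Defs
begin

text \<open>Let \<open>(p, q)\<close> be a Nash equilibrium in which, after transposing the game if necessary,
  the row strategy \<open>p\<close> is mixed, and let \<open>i\<close> be a row with \<open>0 < p i \<le> 1/2\<close>.
  Moving \<open>p\<close> towards \<open>e\<^sub>i\<close> by \<open>\<lambda> = \<epsilon> / (2 (1 - p i))\<close> gives a strategy \<open>p'\<close> at distance
  \<open>\<epsilon>/2\<close> from \<open>p\<close>, supported inside the support of \<open>p\<close> (so every row it uses is still a best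
  response to \<open>q\<close>), and changing every column payoff by at most \<open>\<epsilon>/2\<close>.
  Hence \<open>(p', q)\<close> is a well-supported \<open>\<epsilon>\<close>-equilibrium, and it is an exact equilibrium of the
  game whose column matrix is shifted columnwise by these (at most \<open>\<epsilon>/2\<close>) payoff changes.
  Both \<open>(p, q)\<close> and \<open>(p', q)\<close> must be \<open>\<Delta>\<close>-close to the same equilibrium, so \<open>\<epsilon>/2 \<le> 2\<Delta>\<close>.\<close>

definition mat_transpose :: "('n \<Rightarrow> 'n \<Rightarrow> real) \<Rightarrow> ('n \<Rightarrow> 'n \<Rightarrow> real)" where
  "mat_transpose M = (\<lambda>i j. M j i)"

definition shift_toward :: "('n \<Rightarrow> real) \<Rightarrow> 'n \<Rightarrow> real \<Rightarrow> ('n \<Rightarrow> real)" where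
  "shift_toward p i l = (\<lambda>k. (1 - l) * p k + l * unitv i k)"

lemma unitv_mult_right: "x * unitv i k = (if k = i then x else 0)"
  by (simp add: unitv_def)

lemma bil_unitv_left: "bil (unitv i) M q = (\<Sum>j\<in>UNIV. M i j * q j)"
  unfolding bil_def
  by (subst sum.swap) (simp add: unitv_def if_distrib[where f="\<lambda>x. x * _"] cong: if_cong)

lemma bil_unitv_right: "bil p M (unitv j) = (\<Sum>i\<in>UNIV. p i * M i j)"
  unfolding bil_def by (simp add: unitv_mult_right cong: if_cong)

lemma bil_unitv_unitv [simp]: "bil (unitv i) M (unitv j) = M i j"
  by (simp add: bil_unitv_left unitv_mult_right cong: if_cong)

lemma bil_expand_left: "bil p M q = (\<Sum>i\<in>UNIV. p i * bil (unitv i) M q)"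
  unfolding bil_unitv_left bil_def[of p M q] by (simp add: sum_distrib_left ac_simps)

lemma bil_expand_right: "bil p M q = (\<Sum>j\<in>UNIV. bil p M (unitv j) * q j)"
  unfolding bil_unitv_right bil_def[of p M q] by (subst sum.swap) (simp add: sum_distrib_right)

lemma bil_affine_left: "bil (\<lambda>k. a * p k + b * u k) M q = a * bil p M q + b * bil u M q"
  unfolding bil_def by (simp add: algebra_simps sum.distrib sum_distrib_left)

lemma mat_transpose_mat_transpose [simp]: "mat_transpose (mat_transpose M) = M"
  by (simp add: mat_transpose_def)

lemma bil_mat_transpose [simp]: "bil q (mat_transpose M) p = bil p M q"
  unfolding bil_def mat_transpose_def by (subst sum.swap) (simp add: ac_simps)

lemma entries01_mat_transpose: "entries01 M \<Longrightarrow> entries01 (mat_transpose M)"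
  unfolding entries01_def mat_transpose_def by auto

lemma nash_transpose: "nash R C p q \<longleftrightarrow> nash (mat_transpose C) (mat_transpose R) q p"
  unfolding nash_def by auto

lemma ws_eq_transpose: "ws_eq \<epsilon> R C p q \<longleftrightarrow> ws_eq \<epsilon> (mat_transpose C) (mat_transpose R) q p"
  unfolding ws_eq_def by auto

lemma perturbation_transpose:
  "perturbation \<epsilon> R C R' C' \<longleftrightarrow>
   perturbation \<epsilon> (mat_transpose C) (mat_transpose R) (mat_transpose C') (mat_transpose R')"
  unfolding perturbation_def mat_transpose_def by auto

lemma dist_prof_commute: "dist_prof p q p' q' = dist_prof q p q' p'"
  unfolding dist_prof_def by auto

lemma strong_ws_approx_stable_transpose:
  assumes "strong_ws_approx_stable \<epsilon> \<Delta> R C"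
  shows "strong_ws_approx_stable \<epsilon> \<Delta> (mat_transpose C) (mat_transpose R)"
proof -
  obtain ps qs where eq: "nash R C ps qs"
    and close: "\<And>p q. ws_eq \<epsilon> R C p q \<Longrightarrow> dist_prof p q ps qs \<le> \<Delta>"
    using assms unfolding strong_ws_approx_stable_def by blast
  have "dist_prof q p qs ps \<le> \<Delta>" if "ws_eq \<epsilon> (mat_transpose C) (mat_transpose R) q p" for p q
    using close[of p q] that ws_eq_transpose[of \<epsilon> R C p q] dist_prof_commute[of q p] by simp
  then show ?thesis
    using eq[THEN nash_transpose[THEN iffD1]] unfolding strong_ws_approx_stable_def by blast
qed

lemma strong_pert_stable_transpose:
  assumes "strong_pert_stable \<epsilon> \<Delta> R C"
  shows "strong_pert_stable \<epsilon> \<Delta> (mat_transpose C) (mat_transpose R)"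
proof -
  obtain ps qs where eq: "nash R C ps qs"
    and close: "\<And>R' C' p q. perturbation \<epsilon> R C R' C' \<Longrightarrow> nash R' C' p q \<Longrightarrow>
                  dist_prof p q ps qs \<le> \<Delta>"
    using assms unfolding strong_pert_stable_def by blast
  have "dist_prof q p qs ps \<le> \<Delta>"
    if "perturbation \<epsilon> (mat_transpose C) (mat_transpose R) C' R'" and "nash C' R' q p" for R' C' p q
  proof -
    have "perturbation \<epsilon> R C (mat_transpose R') (mat_transpose C')"
      using that(1) perturbation_transpose[of \<epsilon> R C "mat_transpose R'" "mat_transpose C'"] by simp
    moreover have "nash (mat_transpose R') (mat_transpose C') p q"
      using that(2) nash_transpose[of "mat_transpose R'" "mat_transpose C'" p q] by simp
    ultimately show ?thesis using close dist_prof_commute by metis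
  qed
  then show ?thesis
    using eq[THEN nash_transpose[THEN iffD1]] unfolding strong_pert_stable_def by blast
qed

lemma perturbation_refl: "0 \<le> \<epsilon> \<Longrightarrow> perturbation \<epsilon> R C R C"
  by (simp add: perturbation_def)

lemma nash_row_support_payoff:
  assumes "nash R C p q" and "0 < p k"
  shows "bil (unitv k) R q = bil p R q"
proof -
  let ?loss = "\<lambda>i. p i * (bil p R q - bil (unitv i) R q)"
  have pv: "prob_vec p" and best: "\<And>i. bil (unitv i) R q \<le> bil p R q"
    using assms(1) unfolding nash_def by auto
  have "(\<Sum>i\<in>UNIV. ?loss i) = bil p R q * (\<Sum>i\<in>UNIV. p i) - (\<Sum>i\<in>UNIV. p i * bil (unitv i) R q)"
    by (simp add: algebra_simps sum_subtractf sum_distrib_left sum_distrib_right)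
  also have "\<dots> = 0"
    using pv bil_expand_left[of p R q] unfolding prob_vec_def by simp
  finally have "?loss k = 0"
    using pv best sum_nonneg_eq_0_iff[of UNIV ?loss] unfolding prob_vec_def by simp
  then show ?thesis using assms(2) by simp
qed

lemma nash_col_support_payoff:
  assumes "nash R C p q" and "0 < q k"
  shows "bil p C (unitv k) = bil p C q"
  using nash_row_support_payoff[OF assms(1)[THEN nash_transpose[THEN iffD1]] assms(2)] by simp

lemma nash_imp_ws_eq:
  assumes "nash R C p q" and "0 \<le> \<epsilon>"
  shows "ws_eq \<epsilon> R C p q"
  using assms nash_row_support_payoff[OF assms(1)] nash_col_support_payoff[OF assms(1)]
  unfolding ws_eq_def nash_def supp_def
  by (smt (verit) mem_Collect_eq)

lemma dist_strat_triangle: "dist_strat p p' \<le> dist_strat p s + dist_strat p' s"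
proof -
  have "(\<Sum>i\<in>UNIV. \<bar>p i - p' i\<bar>) \<le> (\<Sum>i\<in>UNIV. \<bar>p i - s i\<bar> + \<bar>p' i - s i\<bar>)"
    by (rule sum_mono) linarith
  then show ?thesis unfolding dist_strat_def by (simp add: sum.distrib)
qed

lemma ws_stable_dist_le:
  assumes "strong_ws_approx_stable \<epsilon> \<Delta> R C"
    and "ws_eq \<epsilon> R C p q" and "ws_eq \<epsilon> R C p' q'"
  shows "dist_strat p p' \<le> 2 * \<Delta>"
  using assms dist_strat_triangle[of p p']
  unfolding strong_ws_approx_stable_def dist_prof_def
  by (smt (verit) max.bounded_iff)

lemma pert_stable_dist_le:
  assumes "strong_pert_stable \<epsilon> \<Delta> R C"
    and "perturbation \<epsilon> R C R1 C1" and "nash R1 C1 p q"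
    and "perturbation \<epsilon> R C R2 C2" and "nash R2 C2 p' q'"
  shows "dist_strat p p' \<le> 2 * \<Delta>"
  using assms dist_strat_triangle[of p p']
  unfolding strong_pert_stable_def dist_prof_def
  by (smt (verit) max.bounded_iff)

lemma prob_vec_le_one: "prob_vec p \<Longrightarrow> p i \<le> 1"
  unfolding prob_vec_def using member_le_sum[of i UNIV p] by auto

lemma prob_vec_pure_or_two_positive:
  assumes "prob_vec p"
  shows "(\<exists>i. p = unitv i) \<or> (\<exists>i1 i2. i1 \<noteq> i2 \<and> 0 < p i1 \<and> 0 < p i2)"
proof (rule disjCI)
  assume single: "\<not> (\<exists>i1 i2. i1 \<noteq> i2 \<and> 0 < p i1 \<and> 0 < p i2)"
  have nonneg: "\<And>k. 0 \<le> p k" and total: "(\<Sum>k\<in>UNIV. p k) = 1"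
    using assms unfolding prob_vec_def by auto
  obtain i where "0 < p i"
    using total nonneg by (metis less_eq_real_def sum.neutral zero_neq_one)
  then have zero: "\<And>k. k \<noteq> i \<Longrightarrow> p k = 0"
    using single nonneg by (metis less_eq_real_def)
  then have "p i = 1"
    using total by (simp add: sum.remove[of UNIV i])
  with zero have "p = unitv i" by (auto simp: unitv_def)
  then show "\<exists>i. p = unitv i" ..
qed

lemma prob_vec_small_positive:
  assumes "prob_vec p" and "i1 \<noteq> i2" and "0 < p i1" and "0 < p i2"
  obtains i where "0 < p i" and "p i \<le> 1/2"
proof -
  have "(\<Sum>k\<in>{i1, i2}. p k) \<le> (\<Sum>k\<in>UNIV. p k)"
    using assms(1) by (intro sum_mono2) (auto simp: prob_vec_def)
  then have "p i1 + p i2 \<le> 1"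
    using assms(1,2) by (simp add: prob_vec_def)
  then show ?thesis
    using that assms(3,4) by (cases "p i1 \<le> 1/2") auto
qed

lemma abs_entry_minus_col_payoff_le:
  assumes "entries01 C" and "prob_vec p"
  shows "\<bar>C i j - bil p C (unitv j)\<bar> \<le> 1 - p i"
proof -
  define S where "S = (\<Sum>k\<in>UNIV - {i}. p k * C k j)"
  have nonneg: "\<And>k. 0 \<le> p k" and C01: "\<And>k. 0 \<le> C k j \<and> C k j \<le> 1"
    using assms unfolding prob_vec_def entries01_def by auto
  have rest: "(\<Sum>k\<in>UNIV - {i}. p k) = 1 - p i"
    using assms(2) unfolding prob_vec_def by (simp add: sum.remove[of UNIV i])
  have "0 \<le> S"
    unfolding S_def using nonneg C01 by (intro sum_nonneg) simp
  moreover have "S \<le> 1 - p i"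
    unfolding S_def rest[symmetric] using nonneg C01 by (intro sum_mono mult_left_le) auto
  moreover have "C i j - bil p C (unitv j) = (1 - p i) * C i j - S"
    unfolding bil_unitv_right S_def by (simp add: sum.remove[of UNIV i] algebra_simps)
  moreover have "0 \<le> (1 - p i) * C i j" "(1 - p i) * C i j \<le> 1 - p i"
    using C01 \<open>S \<le> 1 - p i\<close> \<open>0 \<le> S\<close> by (auto intro: mult_left_le)
  ultimately show ?thesis by linarith
qed

lemma prob_vec_shift_toward:
  assumes "prob_vec p" and "0 \<le> l" and "l \<le> 1"
  shows "prob_vec (shift_toward p i l)"
  using assms unfolding prob_vec_def shift_toward_def
  by (auto simp: unitv_def sum.distrib sum_distrib_left[symmetric])

lemma shift_toward_pos_imp_pos:
  assumes "prob_vec p" and "0 < p i" and "0 < shift_toward p i l k"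
  shows "0 < p k"
  using assms unfolding prob_vec_def shift_toward_def unitv_def
  by (cases "k = i") (auto simp: less_eq_real_def)

lemma dist_strat_shift_toward:
  assumes "prob_vec p" and "0 \<le> l"
  shows "dist_strat p (shift_toward p i l) = l * (1 - p i)"
proof -
  have nonneg: "\<And>k. 0 \<le> p k" and total: "(\<Sum>k\<in>UNIV. p k) = 1"
    using assms(1) unfolding prob_vec_def by auto
  have "\<bar>p k - shift_toward p i l k\<bar> = l * \<bar>p k - unitv i k\<bar>" for k
  proof -
    have "p k - shift_toward p i l k = l * (p k - unitv i k)"
      by (simp add: shift_toward_def algebra_simps)
    then show ?thesis using assms(2) by (simp add: abs_mult)
  qed
  then have "(\<Sum>k\<in>UNIV. \<bar>p k - shift_toward p i l k\<bar>) = l * (\<bar>p i - 1\<bar> + (\<Sum>k\<in>UNIV - {i}. p k))"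
    using nonneg by (simp add: sum_distrib_left[symmetric] sum.remove[of UNIV i] unitv_def)
  also have "\<dots> = l * (2 * (1 - p i))"
    using total prob_vec_le_one[OF assms(1), of i] by (simp add: sum.remove[of UNIV i])
  finally show ?thesis unfolding dist_strat_def by simp
qed

lemma bil_shift_toward:
  "bil (shift_toward p i l) M q = (1 - l) * bil p M q + l * bil (unitv i) M q"
  unfolding shift_toward_def by (rule bil_affine_left)

lemma col_payoff_shift_toward_le:
  assumes "entries01 C" and "prob_vec p" and "0 \<le> l"
  shows "\<bar>bil (shift_toward p i l) C (unitv j) - bil p C (unitv j)\<bar> \<le> l * (1 - p i)"
proof -
  have "bil (shift_toward p i l) C (unitv j) - bil p C (unitv j) = l * (C i j - bil p C (unitv j))"
    by (simp add: bil_shift_toward algebra_simps)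
  then show ?thesis
    using abs_entry_minus_col_payoff_le[OF assms(1,2), of i j] assms(3)
    by (simp add: abs_mult mult_left_mono)
qed

lemma ws_eq_shift_toward:
  assumes "nash R C p q" and "entries01 C" and "0 < p i"
    and "0 \<le> l" and "l \<le> 1" and "2 * (l * (1 - p i)) \<le> \<epsilon>"
  shows "ws_eq \<epsilon> R C (shift_toward p i l) q"
  unfolding ws_eq_def
proof (intro conjI ballI allI)
  have pv: "prob_vec p" and qv: "prob_vec q"
    and row_best: "\<And>j. bil (unitv j) R q \<le> bil p R q"
    and col_best: "\<And>j. bil p C (unitv j) \<le> bil p C q"
    using assms(1) unfolding nash_def by auto
  have col_change: "\<And>j. \<bar>bil (shift_toward p i l) C (unitv j) - bil p C (unitv j)\<bar> \<le> l * (1 - p i)"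
    using col_payoff_shift_toward_le[OF assms(2) pv assms(4)] .
  have "0 \<le> \<epsilon>"
    using assms(4,6) prob_vec_le_one[OF pv, of i] by (smt (verit) mult_nonneg_nonneg)
  show "prob_vec (shift_toward p i l)" using prob_vec_shift_toward[OF pv assms(4,5)] .
  show "prob_vec q" by (fact qv)
  fix k j
  show "bil (unitv j) R q - \<epsilon> \<le> bil (unitv k) R q" if "k \<in> supp (shift_toward p i l)"
    using that shift_toward_pos_imp_pos[OF pv assms(3)] nash_row_support_payoff[OF assms(1)]
      row_best[of j] \<open>0 \<le> \<epsilon>\<close>
    unfolding supp_def by fastforce
  show "bil (shift_toward p i l) C (unitv j) - \<epsilon> \<le> bil (shift_toward p i l) C (unitv k)"
    if "k \<in> supp q"
    using that nash_col_support_payoff[OF assms(1)] col_best[of j] col_change[of j] col_change[of k] assms(6)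
    unfolding supp_def by fastforce
qed

text \<open>Subtracting from each column of \<open>C\<close> its payoff change makes the shifted row strategy
  give the column player exactly the payoffs she had against \<open>p\<close>.\<close>

lemma nash_shift_toward_perturbed:
  assumes "nash R C p q" and "entries01 C" and "0 < p i"
    and "0 \<le> l" and "l \<le> 1" and "l * (1 - p i) \<le> \<epsilon>"
  obtains C' where "perturbation \<epsilon> R C R C'" and "nash R C' (shift_toward p i l) q"
proof
  let ?p' = "shift_toward p i l"
  define C' where "C' = (\<lambda>k j. C k j - (bil ?p' C (unitv j) - bil p C (unitv j)))"
  have pv: "prob_vec p" and qv: "prob_vec q"
    using assms(1) unfolding nash_def by auto
  have p'v: "prob_vec ?p'" using prob_vec_shift_toward[OF pv assms(4,5)] .
  show "perturbation \<epsilon> R C R C'"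
    using col_payoff_shift_toward_le[OF assms(2) pv assms(4)] assms(6)
    unfolding perturbation_def C'_def by (smt (verit) abs_minus_commute)
  have col_same: "bil ?p' C' (unitv j) = bil p C (unitv j)" for j
  proof -
    have "bil ?p' C' (unitv j) = (\<Sum>k\<in>UNIV. ?p' k * C k j) -
        (\<Sum>k\<in>UNIV. ?p' k) * (bil ?p' C (unitv j) - bil p C (unitv j))"
      unfolding bil_unitv_right C'_def
      by (simp add: algebra_simps sum_subtractf sum_distrib_right sum.distrib)
    then show ?thesis using p'v unfolding prob_vec_def by (simp add: bil_unitv_right)
  qed
  have "bil ?p' C' q = bil p C q"
    using bil_expand_right[of ?p' C' q] bil_expand_right[of p C q] col_same by simp
  moreover have "bil ?p' R q = bil p R q"
    using nash_row_support_payoff[OF assms(1,3)] by (simp add: bil_shift_toward algebra_simps)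
  ultimately show "nash R C' ?p' q"
    using assms(1) p'v col_same unfolding nash_def by auto
qed

lemma stability_lower_bounds_of_mixed_row:
  assumes "entries01 C" and "0 < \<epsilon>" and "\<epsilon> \<le> 1"
    and "nash R C p q" and "i1 \<noteq> i2" and "0 < p i1" and "0 < p i2"
  shows "(strong_ws_approx_stable \<epsilon> \<Delta> R C \<longrightarrow> \<epsilon> / 4 \<le> \<Delta>) \<and>
         (strong_pert_stable \<epsilon> \<Delta> R C \<longrightarrow> \<epsilon> / 4 \<le> \<Delta>)"
proof -
  have pv: "prob_vec p" using assms(4) unfolding nash_def by simp
  obtain i where pi: "0 < p i" "p i \<le> 1/2"
    using prob_vec_small_positive[OF pv assms(5-7)] .
  define l where "l = \<epsilon> / (2 * (1 - p i))"
  have l: "0 \<le> l" "l \<le> 1" "l * (1 - p i) = \<epsilon> / 2"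
    using pi assms(2,3) by (auto simp: l_def field_simps)
  have dist: "dist_strat p (shift_toward p i l) = \<epsilon> / 2"
    using dist_strat_shift_toward[OF pv l(1)] l(3) by simp
  show ?thesis
  proof (intro conjI impI)
    assume stable: "strong_ws_approx_stable \<epsilon> \<Delta> R C"
    have "ws_eq \<epsilon> R C (shift_toward p i l) q"
      using ws_eq_shift_toward[OF assms(4,1) pi(1) l(1,2)] l(3) by simp
    then have "dist_strat p (shift_toward p i l) \<le> 2 * \<Delta>"
      using ws_stable_dist_le[OF stable nash_imp_ws_eq[OF assms(4)]] assms(2) by simp
    then show "\<epsilon> / 4 \<le> \<Delta>" using dist by simp
  next
    assume stable: "strong_pert_stable \<epsilon> \<Delta> R C"
    have "l * (1 - p i) \<le> \<epsilon>" using l(3) assms(2) by simp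
    then obtain C' where "perturbation \<epsilon> R C R C'" "nash R C' (shift_toward p i l) q"
      using nash_shift_toward_perturbed[OF assms(4,1) pi(1) l(1,2)] by blast
    then have "dist_strat p (shift_toward p i l) \<le> 2 * \<Delta>"
      using pert_stable_dist_le[OF stable perturbation_refl assms(4)] assms(2) by simp
    then show "\<epsilon> / 4 \<le> \<Delta>" using dist by simp
  qed
qed

theorem lemma6:
  fixes R C :: "'n::finite \<Rightarrow> 'n \<Rightarrow> real" and \<epsilon> \<Delta> :: real
  assumes "entries01 R" and "entries01 C"
    and "0 < \<epsilon>" and "\<epsilon> \<le> 1"
    and "\<exists>p q. nash R C p q \<and> \<not> pure_pair p q"
  shows "(strong_ws_approx_stable \<epsilon> \<Delta> R C \<longrightarrow> \<Delta> \<ge> \<epsilon> / 4) \<and>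
         (strong_pert_stable \<epsilon> \<Delta> R C \<longrightarrow> \<Delta> \<ge> \<epsilon> / 8)"
proof -
  obtain p q where eq: "nash R C p q" and mixed: "\<not> pure_pair p q"
    using assms(5) by blast
  have "prob_vec p" "prob_vec q" using eq unfolding nash_def by auto
  then consider (row) i1 i2 where "i1 \<noteq> i2" "0 < p i1" "0 < p i2"
    | (col) j1 j2 where "j1 \<noteq> j2" "0 < q j1" "0 < q j2"
    using mixed prob_vec_pure_or_two_positive unfolding pure_pair_def by metis
  then have "(strong_ws_approx_stable \<epsilon> \<Delta> R C \<longrightarrow> \<epsilon> / 4 \<le> \<Delta>) \<and>
             (strong_pert_stable \<epsilon> \<Delta> R C \<longrightarrow> \<epsilon> / 4 \<le> \<Delta>)"
  proof cases
    case row
    then show ?thesis using stability_lower_bounds_of_mixed_row[OF assms(2-4) eq] by blast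
  next
    case col
    then show ?thesis
      using stability_lower_bounds_of_mixed_row[OF entries01_mat_transpose[OF assms(1)] assms(3,4)
          eq[THEN nash_transpose[THEN iffD1]]]
        strong_ws_approx_stable_transpose strong_pert_stable_transpose by blast
  qed
  then show ?thesis using assms(3) by auto
qed

end
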